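(* Let $g_n\in\mathscr{A}_3(\Pi)$ ($n\ge1$) and $g\in\mathscr{A}_3(\Pi)$, with $(g_n)$ uniformly bounded. If $L(g_n/g)\to0$ and $V(g_n/g)\to0$, then $L(g_n)\to L(g)$ and $V(g_n)\to V(g)$.
   Context: $E$ is a locally compact complete separable metric space with $\sigma$-finite Borel measure $\mu$; $\Pi$ is a locally trace class orthogonal projection on $L^2(E,\mu)$ with kernel $\Pi(x,y)$. For Borel $f$, $L(f)=\int_E|f(x)-1|^3\Pi(x,x)d\mu(x)$ and $V(f)=\iint_{E^2}|f(x)-f(y)|^2|\Pi(x,y)|^2d\mu(x)d\mu(y)$. $\mathscr{A}_3(\Pi)$ is the set of positive Borel $g$ with $0<\inf g\le\sup g<\infty$, $L(g)<\infty$, $V(g)<\infty$, and for which some exhausting sequence of bounded sets $(E_n)$ satisfies $\lim_n\iint\chi_{E_n^c}(x)\chi_{E_n}(y)|g(x)-1|^2|\Pi(x,y)|^2d\mu(x)d\mu(y)=0$. *)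

theory Defs
  imports "HOL-Analysis.Analysis"
begin

definition square_int :: "'a measure \<Rightarrow> ('a \<Rightarrow> complex) \<Rightarrow> bool" where
  "square_int M f \<longleftrightarrow> f \<in> borel_measurable M \<and> integrable M (\<lambda>x. (cmod (f x))\<^sup>2)"

definition kernel_op :: "'a measure \<Rightarrow> ('a \<Rightarrow> 'a \<Rightarrow> complex) \<Rightarrow> ('a \<Rightarrow> complex) \<Rightarrow> 'a \<Rightarrow> complex" where
  "kernel_op M K f = (\<lambda>x. LINT y|M. K x y * f y)"

definition orth_proj_kernel :: "'a measure \<Rightarrow> ('a \<Rightarrow> 'a \<Rightarrow> complex) \<Rightarrow> bool" where
  "orth_proj_kernel M K \<longleftrightarrow>
     (\<lambda>(x, y). K x y) \<in> borel_measurable (M \<Otimes>\<^sub>M M) \<and>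
     (\<forall>f. square_int M f \<longrightarrow>
        (AE x in M. integrable M (\<lambda>y. K x y * f y)) \<and>
        square_int M (kernel_op M K f) \<and>
        (AE x in M. kernel_op M K (kernel_op M K f) x = kernel_op M K f x)) \<and>
     (\<forall>f h. square_int M f \<and> square_int M h \<longrightarrow>
        (LINT x|M. cnj (kernel_op M K f x) * h x) = (LINT x|M. cnj (f x) * kernel_op M K h x))"

text \<open>Locally trace class: for every bounded Borel set B, the positive operator
  \<open>\<chi>_B \<Pi> \<chi>_B = (\<Pi>\<chi>_B)^* (\<Pi>\<chi>_B)\<close> is trace class, i.e. \<open>\<Pi>\<chi>_B\<close> is Hilbert-Schmidt.\<close>
definition locally_trace_class :: "'a::metric_space measure \<Rightarrow> ('a \<Rightarrow> 'a \<Rightarrow> complex) \<Rightarrow> bool" where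
  "locally_trace_class M K \<longleftrightarrow>
     (\<forall>B. B \<in> sets M \<and> bounded B \<longrightarrow>
        (\<integral>\<^sup>+ y. indicator B y * (\<integral>\<^sup>+ x. ennreal ((cmod (K x y))\<^sup>2) \<partial>M) \<partial>M) < \<infinity>)"

definition diagonal_convention :: "'a measure \<Rightarrow> ('a \<Rightarrow> 'a \<Rightarrow> complex) \<Rightarrow> bool" where
  "diagonal_convention M K \<longleftrightarrow>
     (AE x in M. Im (K x x) = 0 \<and> 0 \<le> Re (K x x) \<and>
        ennreal (Re (K x x)) = (\<integral>\<^sup>+ y. ennreal ((cmod (K x y))\<^sup>2) \<partial>M))"

definition Lfun :: "'a measure \<Rightarrow> ('a \<Rightarrow> 'a \<Rightarrow> complex) \<Rightarrow> ('a \<Rightarrow> real) \<Rightarrow> ennreal" where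
  "Lfun M K f = (\<integral>\<^sup>+ x. ennreal (\<bar>f x - 1\<bar> ^ 3 * Re (K x x)) \<partial>M)"

definition Vfun :: "'a measure \<Rightarrow> ('a \<Rightarrow> 'a \<Rightarrow> complex) \<Rightarrow> ('a \<Rightarrow> real) \<Rightarrow> ennreal" where
  "Vfun M K f = (\<integral>\<^sup>+ x. \<integral>\<^sup>+ y. ennreal ((f x - f y)\<^sup>2 * (cmod (K x y))\<^sup>2) \<partial>M \<partial>M)"

definition exhausting_bounded :: "'a::metric_space measure \<Rightarrow> (nat \<Rightarrow> 'a set) \<Rightarrow> bool" where
  "exhausting_bounded M En \<longleftrightarrow>
     (\<forall>n. En n \<in> sets M \<and> bounded (En n)) \<and> incseq En \<and> (\<Union>n. En n) = UNIV"

definition A3 :: "'a::metric_space measure \<Rightarrow> ('a \<Rightarrow> 'a \<Rightarrow> complex) \<Rightarrow> ('a \<Rightarrow> real) set" where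
  "A3 M K = {g. g \<in> borel_measurable M \<and>
     (\<exists>c>0. \<forall>x. c \<le> g x) \<and> (\<exists>C. \<forall>x. g x \<le> C) \<and>
     Lfun M K g < \<infinity> \<and> Vfun M K g < \<infinity> \<and>
     (\<exists>En. exhausting_bounded M En \<and>
        (\<lambda>n. \<integral>\<^sup>+ x. \<integral>\<^sup>+ y. ennreal (indicator (- En n) x * indicator (En n) y *
              (g x - 1)\<^sup>2 * (cmod (K x y))\<^sup>2) \<partial>M \<partial>M) \<longlonglongrightarrow> 0)}"

end

theory Submission
  imports Defs
begin

text \<open>
  Write \<open>g\<^sub>n = h\<^sub>n g\<close> with \<open>h\<^sub>n = g\<^sub>n / g\<close> and \<open>0 < g \<le> G\<close>. Pointwise,
  \<open>g\<^sub>n(x) - 1 = (g(x) - 1) + (h\<^sub>n(x) - 1) g(x)\<close> and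
  \<open>g\<^sub>n(x) - g\<^sub>n(y) = (g(x) - g(y)) + (h\<^sub>n(x) - h\<^sub>n(y)) g(y) + (h\<^sub>n(x) - 1)(g(x) - g(y))\<close>.
  By convexity, \<open>\<bar>b + d\<bar>\<^sup>k \<le> (1 + \<epsilon>) \<bar>b\<bar>\<^sup>k + C\<^sub>\<epsilon> \<bar>d\<bar>\<^sup>k\<close>; the last cross term is split as
  \<open>\<theta> (g(x) - g(y))\<^sup>2 + G\<^sup>2 \<bar>h\<^sub>n(x) - 1\<bar>\<^sup>3 / \<theta>\<close>, and integrating \<open>\<bar>h\<^sub>n(x) - 1\<bar>\<^sup>3\<close> against
  \<open>\<bar>\<Pi>(x,y)\<bar>\<^sup>2 d\<mu>(y)\<close> gives \<open>L(h\<^sub>n)\<close> by the diagonal convention. This yields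
  \<open>L(g\<^sub>n) \<le> (1 + \<epsilon>) L(g) + C\<^sub>\<epsilon> L(h\<^sub>n)\<close>, \<open>V(g\<^sub>n) \<le> (1 + \<epsilon>) V(g) + A\<^sub>\<epsilon> V(h\<^sub>n) + B\<^sub>\<epsilon> L(h\<^sub>n)\<close>
  and the reverse inequalities (up to a term \<open>\<epsilon> V(g)\<close>); let \<open>n \<rightarrow> \<infinity>\<close>, then \<open>\<epsilon> \<rightarrow> 0\<close>.
\<close>

lemma convex_on_power_nonneg: "convex_on {0::real..} (\<lambda>x. x ^ k)"
  by (cases "even k") (auto intro: convex_on_subset convex_power_even convex_power_odd)

lemma power_add_le_convex_weights:
  fixes b d w :: real
  assumes "0 \<le> b" "0 \<le> d" "0 < w" "w < 1" "k \<ge> 1"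
  shows "(b + d) ^ k \<le> b ^ k / (1 - w) ^ (k - 1) + d ^ k / w ^ (k - 1)"
proof -
  have split: "b + d = (1 - w) *\<^sub>R (b / (1 - w)) + w *\<^sub>R (d / w)"
    using assms by simp
  have pow: "c * (x / c) ^ k = x ^ k / c ^ (k - 1)" if "c > 0" for c x :: real
    using that \<open>k \<ge> 1\<close> by (cases k) (simp_all add: power_divide field_simps)
  have "(b + d) ^ k \<le> (1 - w) * (b / (1 - w)) ^ k + w * (d / w) ^ k"
    unfolding split using assms by (intro convex_onD[OF convex_on_power_nonneg]) auto
  also have "\<dots> = b ^ k / (1 - w) ^ (k - 1) + d ^ k / w ^ (k - 1)"
    using assms by (simp add: pow)
  finally show ?thesis .
qed

lemma abs_add_power_le:
  fixes \<epsilon> :: real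
  assumes "0 < \<epsilon>" "k \<ge> 1"
  obtains C where "0 < C" "\<And>b d :: real. \<bar>b + d\<bar> ^ k \<le> (1 + \<epsilon>) * \<bar>b\<bar> ^ k + C * \<bar>d\<bar> ^ k"
proof -
  have "((\<lambda>w. 1 / (1 - w) ^ (k - 1)) \<longlongrightarrow> 1 / (1 - 0) ^ (k - 1)) (at_right (0::real))"
    by (intro tendsto_intros) auto
  then have "\<forall>\<^sub>F w in at_right 0. 1 / (1 - w) ^ (k - 1) < 1 + \<epsilon> \<and> 0 < w \<and> w < (1::real)"
    using assms by (intro eventually_conj order_tendstoD(2) eventually_at_right_less)
      (auto simp: eventually_at_right_field intro: exI[of _ 1])
  then obtain w :: real where w: "1 / (1 - w) ^ (k - 1) < 1 + \<epsilon>" "0 < w" "w < 1"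
    using eventually_happens' trivial_limit_at_right_real by blast
  show thesis
  proof (rule that[of "1 / w ^ (k - 1)"])
    fix b d :: real
    have "\<bar>b + d\<bar> ^ k \<le> (\<bar>b\<bar> + \<bar>d\<bar>) ^ k"
      by (intro power_mono abs_triangle_ineq) simp
    also have "\<dots> \<le> \<bar>b\<bar> ^ k / (1 - w) ^ (k - 1) + \<bar>d\<bar> ^ k / w ^ (k - 1)"
      using w assms by (intro power_add_le_convex_weights) auto
    also have "\<bar>b\<bar> ^ k / (1 - w) ^ (k - 1) \<le> (1 + \<epsilon>) * \<bar>b\<bar> ^ k"
      using w mult_right_mono[OF less_imp_le[OF w(1)], of "\<bar>b\<bar> ^ k"] by simp
    finally show "\<bar>b + d\<bar> ^ k \<le> (1 + \<epsilon>) * \<bar>b\<bar> ^ k + 1 / w ^ (k - 1) * \<bar>d\<bar> ^ k"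
      by simp
  qed (use w in simp)
qed

lemma power2_le_add_abs_cube_div:
  fixes t \<theta> :: real
  assumes "0 < \<theta>" "\<theta> \<le> 1"
  shows "t\<^sup>2 \<le> \<theta> + \<bar>t\<bar> ^ 3 / \<theta>"
proof (cases "\<bar>t\<bar> \<le> \<theta>")
  case True
  then have "t\<^sup>2 \<le> \<theta>\<^sup>2"
    by (metis abs_ge_zero power2_abs power_mono)
  also have "\<dots> \<le> \<theta>"
    using assms by (simp add: power2_eq_square mult_left_le_one_le)
  finally show ?thesis
    using assms by (simp add: add_increasing2)
next
  case False
  then have "\<theta> * t\<^sup>2 \<le> \<bar>t\<bar> * t\<^sup>2"
    by (simp add: mult_right_mono)
  also have "\<dots> = \<bar>t\<bar> ^ 3"
    by (simp add: power2_eq_square power3_eq_cube abs_mult_self_eq)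
  finally show ?thesis
    using assms by (simp add: field_simps add_increasing)
qed

lemma abs_mult_sub_one_cube_le:
  fixes G \<epsilon> :: real
  assumes "0 < \<epsilon>"
  obtains C where "0 \<le> C"
    and "\<And>p t. 0 \<le> p \<Longrightarrow> p \<le> G \<Longrightarrow> \<bar>t * p - 1\<bar> ^ 3 \<le> (1 + \<epsilon>) * \<bar>p - 1\<bar> ^ 3 + C * \<bar>t - 1\<bar> ^ 3"
    and "\<And>p t. 0 \<le> p \<Longrightarrow> p \<le> G \<Longrightarrow> \<bar>p - 1\<bar> ^ 3 \<le> (1 + \<epsilon>) * \<bar>t * p - 1\<bar> ^ 3 + C * \<bar>t - 1\<bar> ^ 3"
proof -
  obtain C where C: "0 < C" "\<And>b d :: real. \<bar>b + d\<bar> ^ 3 \<le> (1 + \<epsilon>) * \<bar>b\<bar> ^ 3 + C * \<bar>d\<bar> ^ 3"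
    using abs_add_power_le[OF assms, of 3] by auto
  have perturbation: "C * \<bar>(t - 1) * p\<bar> ^ 3 \<le> C * \<bar>G\<bar> ^ 3 * \<bar>t - 1\<bar> ^ 3"
    if "0 \<le> p" "p \<le> G" for p t :: real
  proof -
    have "\<bar>t - 1\<bar> ^ 3 * p ^ 3 \<le> \<bar>t - 1\<bar> ^ 3 * \<bar>G\<bar> ^ 3"
      using that by (intro mult_left_mono power_mono) auto
    then show ?thesis
      using that C(1) by (simp add: abs_mult power_mult_distrib mult.commute)
  qed
  show thesis
  proof (rule that[of "C * \<bar>G\<bar> ^ 3"])
    fix p t :: real assume p: "0 \<le> p" "p \<le> G"
    show "\<bar>t * p - 1\<bar> ^ 3 \<le> (1 + \<epsilon>) * \<bar>p - 1\<bar> ^ 3 + C * \<bar>G\<bar> ^ 3 * \<bar>t - 1\<bar> ^ 3"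
      using C(2)[of "p - 1" "(t - 1) * p"] perturbation[OF p, of t] by (simp add: algebra_simps)
    show "\<bar>p - 1\<bar> ^ 3 \<le> (1 + \<epsilon>) * \<bar>t * p - 1\<bar> ^ 3 + C * \<bar>G\<bar> ^ 3 * \<bar>t - 1\<bar> ^ 3"
      using C(2)[of "t * p - 1" "(1 - t) * p"] perturbation[OF p, of t]
      by (simp add: algebra_simps abs_minus_commute)
  qed (use C in simp)
qed

lemma square_perturbation_le:
  fixes p q s t G \<theta> :: real
  assumes "0 \<le> p" "p \<le> G" "0 \<le> q" "q \<le> G" "0 < \<theta>" "\<theta> \<le> 1"
  shows "((s - t) * q + (s - 1) * (p - q))\<^sup>2
    \<le> 2 * G\<^sup>2 * (s - t)\<^sup>2 + 2 * \<theta> * (p - q)\<^sup>2 + 2 * G\<^sup>2 / \<theta> * \<bar>s - 1\<bar> ^ 3"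
proof -
  have "\<bar>p - q\<bar> \<le> G"
    using assms by linarith
  then have pq: "(p - q)\<^sup>2 \<le> G\<^sup>2" "q\<^sup>2 \<le> G\<^sup>2"
    using assms by (metis abs_ge_zero power2_abs power_mono, simp add: power_mono)
  have sum_sq: "(u + w)\<^sup>2 \<le> 2 * u\<^sup>2 + 2 * w\<^sup>2" for u w :: real
    using power2_sum[of u w] power2_diff[of u w] zero_le_power2[of "u - w"] by linarith
  have "((s - t) * q)\<^sup>2 \<le> G\<^sup>2 * (s - t)\<^sup>2"
    unfolding power_mult_distrib using mult_left_mono[OF pq(2), of "(s - t)\<^sup>2"]
    by (simp add: mult.commute)
  \<comment> \<open>\<open>(s - 1)(p - q)\<close> is small only where \<open>s\<close> is close to \<open>1\<close>: trade it for a little of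
    \<open>(p - q)\<^sup>2\<close> plus \<open>\<bar>s - 1\<bar>\<^sup>3\<close>, which integrates to \<open>L\<close>\<close>
  moreover have "((s - 1) * (p - q))\<^sup>2 \<le> \<theta> * (p - q)\<^sup>2 + G\<^sup>2 / \<theta> * \<bar>s - 1\<bar> ^ 3"
  proof -
    have "((s - 1) * (p - q))\<^sup>2 \<le> (\<theta> + \<bar>s - 1\<bar> ^ 3 / \<theta>) * (p - q)\<^sup>2"
      unfolding power_mult_distrib
      by (rule mult_right_mono[OF power2_le_add_abs_cube_div[OF assms(5,6)]]) simp
    also have "\<dots> \<le> \<theta> * (p - q)\<^sup>2 + G\<^sup>2 / \<theta> * \<bar>s - 1\<bar> ^ 3"
      using pq(1) assms(5) mult_left_mono[OF pq(1), of "\<bar>s - 1\<bar> ^ 3 / \<theta>"]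
      by (simp add: algebra_simps)
    finally show ?thesis .
  qed
  ultimately have "2 * ((s - t) * q)\<^sup>2 + 2 * ((s - 1) * (p - q))\<^sup>2
      \<le> 2 * (G\<^sup>2 * (s - t)\<^sup>2) + 2 * (\<theta> * (p - q)\<^sup>2 + G\<^sup>2 / \<theta> * \<bar>s - 1\<bar> ^ 3)"
    by (intro add_mono mult_left_mono) simp_all
  with sum_sq[of "(s - t) * q" "(s - 1) * (p - q)"] show ?thesis
    by (simp add: algebra_simps)
qed

lemma square_diff_mult_le:
  fixes G \<epsilon> :: real
  assumes "0 < \<epsilon>"
  obtains A B where "0 \<le> A" "0 \<le> B"
    and "\<And>p q s t. 0 \<le> p \<Longrightarrow> p \<le> G \<Longrightarrow> 0 \<le> q \<Longrightarrow> q \<le> G \<Longrightarrow>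
      (s * p - t * q)\<^sup>2 \<le> (1 + \<epsilon>) * (p - q)\<^sup>2 + A * (s - t)\<^sup>2 + B * \<bar>s - 1\<bar> ^ 3"
    and "\<And>p q s t. 0 \<le> p \<Longrightarrow> p \<le> G \<Longrightarrow> 0 \<le> q \<Longrightarrow> q \<le> G \<Longrightarrow>
      (p - q)\<^sup>2 \<le> (1 + \<epsilon>) * (s * p - t * q)\<^sup>2 + \<epsilon> * (p - q)\<^sup>2 + A * (s - t)\<^sup>2 + B * \<bar>s - 1\<bar> ^ 3"
proof -
  obtain C where C: "0 < C" "\<And>u w :: real. (u + w)\<^sup>2 \<le> (1 + \<epsilon> / 2) * u\<^sup>2 + C * w\<^sup>2"
    using abs_add_power_le[of "\<epsilon> / 2" 2] assms by simp blast
  define \<theta> where "\<theta> = min 1 (\<epsilon> / (4 * C))"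
  have \<theta>: "0 < \<theta>" "\<theta> \<le> 1" "C * (2 * \<theta>) \<le> \<epsilon> / 2"
    using assms C(1) by (auto simp: \<theta>_def min_def field_simps)
  define A where "A = C * (2 * G\<^sup>2)"
  define B where "B = C * (2 * G\<^sup>2 / \<theta>)"
  have correction: "C * ((s - t) * q + (s - 1) * (p - q))\<^sup>2
      \<le> \<epsilon> / 2 * (p - q)\<^sup>2 + A * (s - t)\<^sup>2 + B * \<bar>s - 1\<bar> ^ 3"
    if "0 \<le> p" "p \<le> G" "0 \<le> q" "q \<le> G" for p q s t :: real
  proof -
    have "C * ((s - t) * q + (s - 1) * (p - q))\<^sup>2
        \<le> C * (2 * G\<^sup>2 * (s - t)\<^sup>2 + 2 * \<theta> * (p - q)\<^sup>2 + 2 * G\<^sup>2 / \<theta> * \<bar>s - 1\<bar> ^ 3)"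
      using C(1) square_perturbation_le[OF that \<theta>(1,2)] by (intro mult_left_mono) auto
    also have "\<dots> = C * (2 * \<theta>) * (p - q)\<^sup>2 + A * (s - t)\<^sup>2 + B * \<bar>s - 1\<bar> ^ 3"
      by (simp add: A_def B_def algebra_simps)
    also have "\<dots> \<le> \<epsilon> / 2 * (p - q)\<^sup>2 + A * (s - t)\<^sup>2 + B * \<bar>s - 1\<bar> ^ 3"
      using mult_right_mono[OF \<theta>(3), of "(p - q)\<^sup>2"] by simp
    finally show ?thesis .
  qed
  show thesis
  proof (rule that[of A B])
    fix p q s t :: real assume pq: "0 \<le> p" "p \<le> G" "0 \<le> q" "q \<le> G"
    let ?d = "(s - t) * q + (s - 1) * (p - q)"
    have "s * p - t * q = (p - q) + ?d" "p - q = (s * p - t * q) + - ?d"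
      by (simp_all add: algebra_simps)
    then have "(s * p - t * q)\<^sup>2 \<le> (1 + \<epsilon> / 2) * (p - q)\<^sup>2 + C * ?d\<^sup>2"
      and "(p - q)\<^sup>2 \<le> (1 + \<epsilon> / 2) * (s * p - t * q)\<^sup>2 + C * ?d\<^sup>2"
      using C(2) by (metis power2_minus)+
    moreover have "(1 + \<epsilon> / 2) * (s * p - t * q)\<^sup>2 \<le> (1 + \<epsilon>) * (s * p - t * q)\<^sup>2"
      using assms by (intro mult_right_mono) auto
    moreover have "(1 + \<epsilon> / 2) * (p - q)\<^sup>2 + \<epsilon> / 2 * (p - q)\<^sup>2 = (1 + \<epsilon>) * (p - q)\<^sup>2"
      and "\<epsilon> / 2 * (p - q)\<^sup>2 \<le> \<epsilon> * (p - q)\<^sup>2"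
      using assms by (simp_all add: algebra_simps)
    ultimately show "(s * p - t * q)\<^sup>2 \<le> (1 + \<epsilon>) * (p - q)\<^sup>2 + A * (s - t)\<^sup>2 + B * \<bar>s - 1\<bar> ^ 3"
      and "(p - q)\<^sup>2 \<le> (1 + \<epsilon>) * (s * p - t * q)\<^sup>2 + \<epsilon> * (p - q)\<^sup>2 + A * (s - t)\<^sup>2 + B * \<bar>s - 1\<bar> ^ 3"
      using correction[OF pq, of s t] by linarith+
  qed (use C \<theta> in \<open>simp_all add: A_def B_def\<close>)
qed

lemma Vfun_eq_pair_integral:
  assumes "sigma_finite_measure M" and "(\<lambda>(x, y). K x y) \<in> borel_measurable (M \<Otimes>\<^sub>M M)"
    and [measurable]: "f \<in> borel_measurable M"
  shows "Vfun M K f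
    = (\<integral>\<^sup>+z. ennreal ((f (fst z) - f (snd z))\<^sup>2 * (cmod (K (fst z) (snd z)))\<^sup>2) \<partial>(M \<Otimes>\<^sub>M M))"
proof -
  note [measurable] = assms(2)[unfolded case_prod_unfold]
  show ?thesis
    unfolding Vfun_def by (subst sigma_finite_measure.nn_integral_fst[OF assms(1), symmetric]) simp_all
qed

lemma Lfun_eq_pair_integral:
  assumes "sigma_finite_measure M" and "(\<lambda>(x, y). K x y) \<in> borel_measurable (M \<Otimes>\<^sub>M M)"
    and "diagonal_convention M K" and [measurable]: "f \<in> borel_measurable M"
  shows "Lfun M K f
    = (\<integral>\<^sup>+z. ennreal (\<bar>f (fst z) - 1\<bar> ^ 3 * (cmod (K (fst z) (snd z)))\<^sup>2) \<partial>(M \<Otimes>\<^sub>M M))"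
proof -
  note [measurable] = assms(2)[unfolded case_prod_unfold]
  have "(\<integral>\<^sup>+z. ennreal (\<bar>f (fst z) - 1\<bar> ^ 3 * (cmod (K (fst z) (snd z)))\<^sup>2) \<partial>(M \<Otimes>\<^sub>M M))
      = (\<integral>\<^sup>+x. \<integral>\<^sup>+y. ennreal (\<bar>f x - 1\<bar> ^ 3) * ennreal ((cmod (K x y))\<^sup>2) \<partial>M \<partial>M)"
    by (subst sigma_finite_measure.nn_integral_fst[OF assms(1), symmetric]) (simp_all add: ennreal_mult)
  also have "\<dots> = (\<integral>\<^sup>+x. ennreal (\<bar>f x - 1\<bar> ^ 3) * (\<integral>\<^sup>+y. ennreal ((cmod (K x y))\<^sup>2) \<partial>M) \<partial>M)"
  proof (rule nn_integral_cong)
    fix x assume "x \<in> space M"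
    from measurable_Pair2[OF assms(2) this] have [measurable]: "K x \<in> borel_measurable M"
      by simp
    show "(\<integral>\<^sup>+y. ennreal (\<bar>f x - 1\<bar> ^ 3) * ennreal ((cmod (K x y))\<^sup>2) \<partial>M)
      = ennreal (\<bar>f x - 1\<bar> ^ 3) * (\<integral>\<^sup>+y. ennreal ((cmod (K x y))\<^sup>2) \<partial>M)"
      by (simp add: nn_integral_cmult)
  qed
  also have "\<dots> = Lfun M K f"
    unfolding Lfun_def using assms(3) unfolding diagonal_convention_def
    by (intro nn_integral_cong_AE) (auto simp: ennreal_mult)
  finally show ?thesis ..
qed

lemma Lfun_le_lincomb:
  assumes [measurable]: "(\<lambda>x. K x x) \<in> borel_measurable M"
    "f1 \<in> borel_measurable M" "f2 \<in> borel_measurable M" "r \<in> borel_measurable M"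
    and pt: "\<And>x. \<bar>f1 x - 1\<bar> ^ 3 \<le> \<alpha> * \<bar>f2 x - 1\<bar> ^ 3 + \<gamma> * \<bar>r x - 1\<bar> ^ 3"
    and "0 \<le> \<alpha>" "0 \<le> \<gamma>"
  shows "Lfun M K f1 \<le> ennreal \<alpha> * Lfun M K f2 + ennreal \<gamma> * Lfun M K r"
proof -
  have "ennreal (\<bar>f1 x - 1\<bar> ^ 3 * Re (K x x))
      \<le> ennreal \<alpha> * ennreal (\<bar>f2 x - 1\<bar> ^ 3 * Re (K x x)) + ennreal \<gamma> * ennreal (\<bar>r x - 1\<bar> ^ 3 * Re (K x x))"
    for x
  proof (cases "0 \<le> Re (K x x)")
    case True
    have "\<bar>f1 x - 1\<bar> ^ 3 * Re (K x x)
        \<le> \<alpha> * (\<bar>f2 x - 1\<bar> ^ 3 * Re (K x x)) + \<gamma> * (\<bar>r x - 1\<bar> ^ 3 * Re (K x x))"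
      using mult_right_mono[OF pt True] by (simp add: algebra_simps)
    then have "ennreal (\<bar>f1 x - 1\<bar> ^ 3 * Re (K x x))
        \<le> ennreal (\<alpha> * (\<bar>f2 x - 1\<bar> ^ 3 * Re (K x x)) + \<gamma> * (\<bar>r x - 1\<bar> ^ 3 * Re (K x x)))"
      by (rule ennreal_leI)
    then show ?thesis
      using True assms(6,7) by (simp add: ennreal_plus ennreal_mult)
  qed (simp add: ennreal_neg mult_nonneg_nonpos)
  then have "Lfun M K f1 \<le> (\<integral>\<^sup>+x. ennreal \<alpha> * ennreal (\<bar>f2 x - 1\<bar> ^ 3 * Re (K x x))
      + ennreal \<gamma> * ennreal (\<bar>r x - 1\<bar> ^ 3 * Re (K x x)) \<partial>M)"
    unfolding Lfun_def by (intro nn_integral_mono)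
  also have "\<dots> = ennreal \<alpha> * Lfun M K f2 + ennreal \<gamma> * Lfun M K r"
    unfolding Lfun_def by (simp add: nn_integral_add nn_integral_cmult)
  finally show ?thesis .
qed

lemma Vfun_le_lincomb:
  assumes "sigma_finite_measure M" and "(\<lambda>(x, y). K x y) \<in> borel_measurable (M \<Otimes>\<^sub>M M)"
    and "diagonal_convention M K"
    and [measurable]: "f1 \<in> borel_measurable M" "f2 \<in> borel_measurable M" "f3 \<in> borel_measurable M"
      "r \<in> borel_measurable M"
    and pt: "\<And>x y. (f1 x - f1 y)\<^sup>2 \<le> \<alpha> * (f2 x - f2 y)\<^sup>2 + \<beta> * (f3 x - f3 y)\<^sup>2
        + \<gamma> * (r x - r y)\<^sup>2 + \<delta> * \<bar>r x - 1\<bar> ^ 3"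
    and "0 \<le> \<alpha>" "0 \<le> \<beta>" "0 \<le> \<gamma>" "0 \<le> \<delta>"
  shows "Vfun M K f1 \<le> ennreal \<alpha> * Vfun M K f2 + ennreal \<beta> * Vfun M K f3
    + ennreal \<gamma> * Vfun M K r + ennreal \<delta> * Lfun M K r"
proof -
  note [measurable] = assms(2)[unfolded case_prod_unfold]
  define w where "w z = (cmod (K (fst z) (snd z)))\<^sup>2" for z
  define D where "D f z = ennreal ((f (fst z) - f (snd z))\<^sup>2 * w z)" for f :: "'a \<Rightarrow> real" and z
  define E where "E z = ennreal (\<bar>r (fst z) - 1\<bar> ^ 3 * w z)" for z
  have [measurable]: "D f \<in> borel_measurable (M \<Otimes>\<^sub>M M)" if [measurable]: "f \<in> borel_measurable M" for f
    unfolding D_def w_def by measurable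
  have [measurable]: "E \<in> borel_measurable (M \<Otimes>\<^sub>M M)"
    unfolding E_def w_def by measurable
  have V: "Vfun M K f = integral\<^sup>N (M \<Otimes>\<^sub>M M) (D f)" if "f \<in> borel_measurable M" for f
    unfolding D_def w_def using Vfun_eq_pair_integral[OF assms(1,2) that] by simp
  have L: "Lfun M K r = integral\<^sup>N (M \<Otimes>\<^sub>M M) E"
    unfolding E_def w_def using Lfun_eq_pair_integral[OF assms(1-3)] by simp
  have "D f1 z \<le> ennreal \<alpha> * D f2 z + ennreal \<beta> * D f3 z + ennreal \<gamma> * D r z + ennreal \<delta> * E z" for z
  proof -
    have "(f1 (fst z) - f1 (snd z))\<^sup>2 * w z \<le> \<alpha> * ((f2 (fst z) - f2 (snd z))\<^sup>2 * w z)
        + \<beta> * ((f3 (fst z) - f3 (snd z))\<^sup>2 * w z) + \<gamma> * ((r (fst z) - r (snd z))\<^sup>2 * w z)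
        + \<delta> * (\<bar>r (fst z) - 1\<bar> ^ 3 * w z)"
      using mult_right_mono[OF pt[of "fst z" "snd z"], of "w z"] by (simp add: w_def algebra_simps)
    then have "D f1 z \<le> ennreal (\<alpha> * ((f2 (fst z) - f2 (snd z))\<^sup>2 * w z)
        + \<beta> * ((f3 (fst z) - f3 (snd z))\<^sup>2 * w z) + \<gamma> * ((r (fst z) - r (snd z))\<^sup>2 * w z)
        + \<delta> * (\<bar>r (fst z) - 1\<bar> ^ 3 * w z))"
      unfolding D_def by (rule ennreal_leI)
    then show ?thesis
      using assms(9-12) by (simp add: D_def E_def w_def ennreal_plus ennreal_mult)
  qed
  then have "integral\<^sup>N (M \<Otimes>\<^sub>M M) (D f1) \<le> (\<integral>\<^sup>+z. ennreal \<alpha> * D f2 z + ennreal \<beta> * D f3 z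
      + ennreal \<gamma> * D r z + ennreal \<delta> * E z \<partial>(M \<Otimes>\<^sub>M M))"
    by (intro nn_integral_mono)
  also have "\<dots> = ennreal \<alpha> * integral\<^sup>N (M \<Otimes>\<^sub>M M) (D f2) + ennreal \<beta> * integral\<^sup>N (M \<Otimes>\<^sub>M M) (D f3)
      + ennreal \<gamma> * integral\<^sup>N (M \<Otimes>\<^sub>M M) (D r) + ennreal \<delta> * integral\<^sup>N (M \<Otimes>\<^sub>M M) E"
    by (simp add: nn_integral_add nn_integral_cmult)
  finally show ?thesis
    unfolding V[OF assms(4)] V[OF assms(5)] V[OF assms(6)] V[OF assms(7)] L .
qed

lemma ennreal_eventually_less_of_upper_approx:
  fixes u :: "nat \<Rightarrow> ennreal"
  assumes "a < y" "a < \<infinity>"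
    and upper: "\<And>\<epsilon>. 0 < \<epsilon> \<Longrightarrow> \<exists>e. e \<longlonglongrightarrow> 0 \<and> (\<forall>n. u n \<le> ennreal (1 + \<epsilon>) * a + e n)"
  shows "\<forall>\<^sub>F n in sequentially. u n < y"
proof -
  have "((\<lambda>\<epsilon>. a * ennreal (1 + \<epsilon>)) \<longlongrightarrow> a * ennreal (1 + 0)) (at_right 0)"
    using assms(2) by (intro ennreal_tendsto_cmult tendsto_intros) auto
  then have "\<forall>\<^sub>F \<epsilon> in at_right 0. a * ennreal (1 + \<epsilon>) < y \<and> 0 < (\<epsilon>::real)"
    using assms(1) by (intro eventually_conj order_tendstoD(2) eventually_at_right_less) auto
  then obtain \<epsilon> :: real where \<epsilon>: "a * ennreal (1 + \<epsilon>) < y" "0 < \<epsilon>"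
    using eventually_happens'[OF trivial_limit_at_right_real] by blast
  obtain e where e: "e \<longlonglongrightarrow> 0" "\<And>n. u n \<le> ennreal (1 + \<epsilon>) * a + e n"
    using upper[OF \<epsilon>(2)] by blast
  have "(\<lambda>n. ennreal (1 + \<epsilon>) * a + e n) \<longlonglongrightarrow> ennreal (1 + \<epsilon>) * a + 0"
    by (intro tendsto_add tendsto_const e(1))
  then have "\<forall>\<^sub>F n in sequentially. ennreal (1 + \<epsilon>) * a + e n < y"
    using \<epsilon>(1) by (intro order_tendstoD(2)) (simp_all add: mult.commute)
  then show ?thesis
    by eventually_elim (use e(2) in \<open>blast intro: order.strict_trans1\<close>)
qed

lemma ennreal_eventually_greater_of_lower_approx:
  fixes u :: "nat \<Rightarrow> ennreal"
  assumes "y < a" "a < \<infinity>"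
    and lower: "\<And>\<epsilon>. 0 < \<epsilon> \<Longrightarrow> \<exists>e. e \<longlonglongrightarrow> 0 \<and> (\<forall>n. a \<le> ennreal (1 + \<epsilon>) * u n + ennreal \<epsilon> * a + e n)"
  shows "\<forall>\<^sub>F n in sequentially. y < u n"
proof -
  have "((\<lambda>\<epsilon>. y * ennreal (1 + \<epsilon>) + a * ennreal \<epsilon>) \<longlongrightarrow> y * ennreal (1 + 0) + a * ennreal 0) (at_right 0)"
    using assms by (intro tendsto_add ennreal_tendsto_cmult tendsto_intros) auto
  then have "\<forall>\<^sub>F \<epsilon> in at_right 0. y * ennreal (1 + \<epsilon>) + a * ennreal \<epsilon> < a \<and> 0 < (\<epsilon>::real)"
    using assms(1) by (intro eventually_conj order_tendstoD(2) eventually_at_right_less) auto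
  then obtain \<epsilon> :: real where \<epsilon>: "y * ennreal (1 + \<epsilon>) + a * ennreal \<epsilon> < a" "0 < \<epsilon>"
    using eventually_happens'[OF trivial_limit_at_right_real] by blast
  obtain e where e: "e \<longlonglongrightarrow> 0" "\<And>n. a \<le> ennreal (1 + \<epsilon>) * u n + ennreal \<epsilon> * a + e n"
    using lower[OF \<epsilon>(2)] by blast
  have "(\<lambda>n. ennreal (1 + \<epsilon>) * y + ennreal \<epsilon> * a + e n) \<longlonglongrightarrow> ennreal (1 + \<epsilon>) * y + ennreal \<epsilon> * a + 0"
    by (intro tendsto_add tendsto_const e(1))
  then have "\<forall>\<^sub>F n in sequentially. ennreal (1 + \<epsilon>) * y + ennreal \<epsilon> * a + e n < a"
    using \<epsilon>(1) by (intro order_tendstoD(2)) (simp_all add: mult.commute)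
  then show ?thesis
  proof eventually_elim
    case (elim n)
    show "y < u n"
    proof (rule ccontr)
      assume "\<not> y < u n"
      then have "ennreal (1 + \<epsilon>) * u n + ennreal \<epsilon> * a + e n \<le> ennreal (1 + \<epsilon>) * y + ennreal \<epsilon> * a + e n"
        by (intro add_right_mono mult_left_mono) auto
      with e(2)[of n] elim show False
        by (metis leD order.trans)
    qed
  qed
qed

lemma ennreal_tendsto_of_approx:
  fixes u :: "nat \<Rightarrow> ennreal"
  assumes "a < \<infinity>"
    and approx: "\<And>\<epsilon>. 0 < \<epsilon> \<Longrightarrow> \<exists>e. e \<longlonglongrightarrow> 0 \<and> (\<forall>n. u n \<le> ennreal (1 + \<epsilon>) * a + e n)
      \<and> (\<forall>n. a \<le> ennreal (1 + \<epsilon>) * u n + ennreal \<epsilon> * a + e n)"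
  shows "u \<longlonglongrightarrow> a"
proof (rule order_tendstoI)
  show "\<forall>\<^sub>F n in sequentially. u n < y" if "a < y" for y
    using approx by (intro ennreal_eventually_less_of_upper_approx[OF that assms(1)]) blast
  show "\<forall>\<^sub>F n in sequentially. y < u n" if "y < a" for y
    using approx by (intro ennreal_eventually_greater_of_lower_approx[OF that assms(1)]) blast
qed

lemma Lfun_tendsto_of_ratio:
  fixes f :: "'a \<Rightarrow> real" and fs :: "nat \<Rightarrow> 'a \<Rightarrow> real"
  assumes [measurable]: "(\<lambda>x. K x x) \<in> borel_measurable M"
    "f \<in> borel_measurable M" "\<And>n. fs n \<in> borel_measurable M"
    and f: "\<And>x. 0 < f x" "\<And>x. f x \<le> G" and "Lfun M K f < \<infinity>"
    and ratio: "(\<lambda>n. Lfun M K (\<lambda>x. fs n x / f x)) \<longlonglongrightarrow> 0"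
  shows "(\<lambda>n. Lfun M K (fs n)) \<longlonglongrightarrow> Lfun M K f"
proof -
  define h where "h n x = fs n x / f x" for n x
  have h_meas [measurable]: "h n \<in> borel_measurable M" for n
    unfolding h_def by measurable
  have fs: "fs n x = h n x * f x" for n x
    using f(1)[of x] by (simp add: h_def)
  have approx: "\<exists>e. e \<longlonglongrightarrow> 0 \<and> (\<forall>n. Lfun M K (fs n) \<le> ennreal (1 + \<epsilon>) * Lfun M K f + e n)
      \<and> (\<forall>n. Lfun M K f \<le> ennreal (1 + \<epsilon>) * Lfun M K (fs n) + ennreal \<epsilon> * Lfun M K f + e n)"
    if "0 < \<epsilon>" for \<epsilon>
  proof -
    obtain C where C: "0 \<le> C"
      "\<And>p t. 0 \<le> p \<Longrightarrow> p \<le> G \<Longrightarrow> \<bar>t * p - 1\<bar> ^ 3 \<le> (1 + \<epsilon>) * \<bar>p - 1\<bar> ^ 3 + C * \<bar>t - 1\<bar> ^ 3"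
      "\<And>p t. 0 \<le> p \<Longrightarrow> p \<le> G \<Longrightarrow> \<bar>p - 1\<bar> ^ 3 \<le> (1 + \<epsilon>) * \<bar>t * p - 1\<bar> ^ 3 + C * \<bar>t - 1\<bar> ^ 3"
      using abs_mult_sub_one_cube_le[OF \<open>0 < \<epsilon>\<close>] by blast
    have "(\<lambda>n. ennreal C * Lfun M K (h n)) \<longlonglongrightarrow> ennreal C * 0"
      using ratio unfolding h_def by (intro ennreal_tendsto_cmult) auto
    moreover have "Lfun M K (fs n) \<le> ennreal (1 + \<epsilon>) * Lfun M K f + ennreal C * Lfun M K (h n)"
      and "Lfun M K f \<le> ennreal (1 + \<epsilon>) * Lfun M K (fs n) + ennreal \<epsilon> * Lfun M K f
        + ennreal C * Lfun M K (h n)" for n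
    proof -
      have up: "\<bar>fs n x - 1\<bar> ^ 3 \<le> (1 + \<epsilon>) * \<bar>f x - 1\<bar> ^ 3 + C * \<bar>h n x - 1\<bar> ^ 3"
        and down: "\<bar>f x - 1\<bar> ^ 3 \<le> (1 + \<epsilon>) * \<bar>fs n x - 1\<bar> ^ 3 + C * \<bar>h n x - 1\<bar> ^ 3" for x
        using C(2,3)[of "f x" "h n x"] f[of x] unfolding fs by auto
      show "Lfun M K (fs n) \<le> ennreal (1 + \<epsilon>) * Lfun M K f + ennreal C * Lfun M K (h n)"
        by (rule Lfun_le_lincomb[OF _ _ _ _ up]) (use that C(1) in simp_all)
      have "Lfun M K f \<le> ennreal (1 + \<epsilon>) * Lfun M K (fs n) + ennreal C * Lfun M K (h n)"
        by (rule Lfun_le_lincomb[OF _ _ _ _ down]) (use that C(1) in simp_all)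
      then show "Lfun M K f \<le> ennreal (1 + \<epsilon>) * Lfun M K (fs n) + ennreal \<epsilon> * Lfun M K f
          + ennreal C * Lfun M K (h n)"
        by (rule order_trans) (intro add_mono add_increasing2 order_refl zero_le)
    qed
    ultimately show ?thesis
      by (intro exI[of _ "\<lambda>n. ennreal C * Lfun M K (h n)"]) auto
  qed
  show ?thesis
    by (rule ennreal_tendsto_of_approx[OF assms(6) approx])
qed

lemma Vfun_tendsto_of_ratio:
  fixes f :: "'a \<Rightarrow> real" and fs :: "nat \<Rightarrow> 'a \<Rightarrow> real"
  assumes "sigma_finite_measure M" and "(\<lambda>(x, y). K x y) \<in> borel_measurable (M \<Otimes>\<^sub>M M)"
    and "diagonal_convention M K"
    and [measurable]: "f \<in> borel_measurable M" "\<And>n. fs n \<in> borel_measurable M"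
    and f: "\<And>x. 0 < f x" "\<And>x. f x \<le> G" and "Vfun M K f < \<infinity>"
    and ratio: "(\<lambda>n. Lfun M K (\<lambda>x. fs n x / f x)) \<longlonglongrightarrow> 0" "(\<lambda>n. Vfun M K (\<lambda>x. fs n x / f x)) \<longlonglongrightarrow> 0"
  shows "(\<lambda>n. Vfun M K (fs n)) \<longlonglongrightarrow> Vfun M K f"
proof -
  define h where "h n x = fs n x / f x" for n x
  have h_meas [measurable]: "h n \<in> borel_measurable M" for n
    unfolding h_def by measurable
  have fs: "fs n x = h n x * f x" for n x
    using f(1)[of x] by (simp add: h_def)
  have approx: "\<exists>e. e \<longlonglongrightarrow> 0 \<and> (\<forall>n. Vfun M K (fs n) \<le> ennreal (1 + \<epsilon>) * Vfun M K f + e n)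
      \<and> (\<forall>n. Vfun M K f \<le> ennreal (1 + \<epsilon>) * Vfun M K (fs n) + ennreal \<epsilon> * Vfun M K f + e n)"
    if "0 < \<epsilon>" for \<epsilon>
  proof -
    obtain A B where AB: "0 \<le> A" "0 \<le> B"
      "\<And>p q s t. 0 \<le> p \<Longrightarrow> p \<le> G \<Longrightarrow> 0 \<le> q \<Longrightarrow> q \<le> G \<Longrightarrow>
        (s * p - t * q)\<^sup>2 \<le> (1 + \<epsilon>) * (p - q)\<^sup>2 + A * (s - t)\<^sup>2 + B * \<bar>s - 1\<bar> ^ 3"
      "\<And>p q s t. 0 \<le> p \<Longrightarrow> p \<le> G \<Longrightarrow> 0 \<le> q \<Longrightarrow> q \<le> G \<Longrightarrow>
        (p - q)\<^sup>2 \<le> (1 + \<epsilon>) * (s * p - t * q)\<^sup>2 + \<epsilon> * (p - q)\<^sup>2 + A * (s - t)\<^sup>2 + B * \<bar>s - 1\<bar> ^ 3"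
      using square_diff_mult_le[OF \<open>0 < \<epsilon>\<close>] by blast
    define e where "e n = ennreal A * Vfun M K (h n) + ennreal B * Lfun M K (h n)" for n
    have "e \<longlonglongrightarrow> ennreal A * 0 + ennreal B * 0"
      using ratio unfolding e_def h_def by (intro tendsto_add ennreal_tendsto_cmult) auto
    moreover have "Vfun M K (fs n) \<le> ennreal (1 + \<epsilon>) * Vfun M K f + ennreal 0 * Vfun M K f
        + ennreal A * Vfun M K (h n) + ennreal B * Lfun M K (h n)"
      and "Vfun M K f \<le> ennreal (1 + \<epsilon>) * Vfun M K (fs n) + ennreal \<epsilon> * Vfun M K f
        + ennreal A * Vfun M K (h n) + ennreal B * Lfun M K (h n)" for n
    proof -
      have up: "(fs n x - fs n y)\<^sup>2 \<le> (1 + \<epsilon>) * (f x - f y)\<^sup>2 + 0 * (f x - f y)\<^sup>2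
          + A * (h n x - h n y)\<^sup>2 + B * \<bar>h n x - 1\<bar> ^ 3"
        and down: "(f x - f y)\<^sup>2 \<le> (1 + \<epsilon>) * (fs n x - fs n y)\<^sup>2 + \<epsilon> * (f x - f y)\<^sup>2
          + A * (h n x - h n y)\<^sup>2 + B * \<bar>h n x - 1\<bar> ^ 3" for x y
        using AB(3,4)[of "f x" "f y" "h n x" "h n y"] f[of x] f[of y] unfolding fs by auto
      show "Vfun M K (fs n) \<le> ennreal (1 + \<epsilon>) * Vfun M K f + ennreal 0 * Vfun M K f
          + ennreal A * Vfun M K (h n) + ennreal B * Lfun M K (h n)"
        by (rule Vfun_le_lincomb[OF assms(1-3) _ _ _ _ up]) (use that AB in simp_all)
      show "Vfun M K f \<le> ennreal (1 + \<epsilon>) * Vfun M K (fs n) + ennreal \<epsilon> * Vfun M K f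
          + ennreal A * Vfun M K (h n) + ennreal B * Lfun M K (h n)"
        by (rule Vfun_le_lincomb[OF assms(1-3) _ _ _ _ down]) (use that AB in simp_all)
    qed
    ultimately show ?thesis
      by (intro exI[of _ e]) (simp add: e_def add.assoc)
  qed
  show ?thesis
    by (rule ennreal_tendsto_of_approx[OF assms(8) approx])
qed

theorem lemma7p7:
  fixes M :: "'a::polish_space measure"
    and K :: "'a \<Rightarrow> 'a \<Rightarrow> complex"
    and gs :: "nat \<Rightarrow> 'a \<Rightarrow> real"
    and g :: "'a \<Rightarrow> real"
  assumes "locally_compact_space (euclidean :: 'a topology)"
    and "sets M = sets borel"
    and "sigma_finite_measure M"
    and "orth_proj_kernel M K"
    and "locally_trace_class M K"
    and "diagonal_convention M K"
    and "\<And>n. gs n \<in> A3 M K"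
    and "g \<in> A3 M K"
    and "\<exists>C. \<forall>n x. \<bar>gs n x\<bar> \<le> C"
    and "(\<lambda>n. Lfun M K (\<lambda>x. gs n x / g x)) \<longlonglongrightarrow> 0"
    and "(\<lambda>n. Vfun M K (\<lambda>x. gs n x / g x)) \<longlonglongrightarrow> 0"
  shows "(\<lambda>n. Lfun M K (gs n)) \<longlonglongrightarrow> Lfun M K g \<and>
         (\<lambda>n. Vfun M K (gs n)) \<longlonglongrightarrow> Vfun M K g"
proof -
  \<comment> \<open>Of the hypotheses on \<open>\<Pi>\<close> only measurability and the diagonal convention are used.\<close>
  have K: "(\<lambda>(x, y). K x y) \<in> borel_measurable (M \<Otimes>\<^sub>M M)"
    using assms(4) by (simp add: orth_proj_kernel_def)
  have "(\<lambda>x. (x, x)) \<in> M \<rightarrow>\<^sub>M M \<Otimes>\<^sub>M M"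
    by measurable
  from measurable_comp[OF this K] have K_diag: "(\<lambda>x. K x x) \<in> borel_measurable M"
    by (simp add: comp_def)
  obtain c G where "0 < c" "\<And>x. c \<le> g x" "\<And>x. g x \<le> G"
    using assms(8) by (auto simp: A3_def)
  then have g_pos: "\<And>x. 0 < g x"
    by (meson less_le_trans)
  have "g \<in> borel_measurable M" "\<And>n. gs n \<in> borel_measurable M"
    and "Lfun M K g < \<infinity>" "Vfun M K g < \<infinity>"
    using assms(7,8) by (auto simp: A3_def)
  then show ?thesis
    using Lfun_tendsto_of_ratio[OF K_diag _ _ g_pos \<open>\<And>x. g x \<le> G\<close> _ assms(10)]
      Vfun_tendsto_of_ratio[OF assms(3) K assms(6) _ _ g_pos \<open>\<And>x. g x \<le> G\<close> _ assms(10,11)]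
    by blast
qed

end
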